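(* Let $M$ be a matroid on a finite set $E$ and let $P=\{K_1,K_2,\dots,K_t\}$ (with the $K_i$ distinct) be a partition of $\cup\mathcal{B}(M)$. Then $|B\cap K_i|=1$ for every $B\in\mathcal{B}(M)$ and every $i\in\{1,\dots,t\}$ if and only if $\mathcal{B}(M)=\{\{b_1,b_2,\dots,b_t\}: b_i\in K_i,\ 1\le i\le t\}$.
   Context: $\mathcal{B}(M)$ denotes the family of bases of $M$ and $\cup\mathcal{B}(M)$ the union of all bases. A partition of a set $U$ is a family of nonempty pairwise disjoint subsets of $U$ whose union is $U$. *)

theory Defs
  imports Main
begin

definition matroid :: "'a set \<Rightarrow> 'a set set \<Rightarrow> bool" where
  "matroid E \<I> \<longleftrightarrow> finite E \<and> (\<forall>X\<in>\<I>. X \<subseteq> E) \<and> {} \<in> \<I> \<and>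
     (\<forall>X Y. X \<in> \<I> \<longrightarrow> Y \<subseteq> X \<longrightarrow> Y \<in> \<I>) \<and>
     (\<forall>X Y. X \<in> \<I> \<longrightarrow> Y \<in> \<I> \<longrightarrow> card X < card Y \<longrightarrow> (\<exists>y\<in>Y - X. insert y X \<in> \<I>))"

definition bases :: "'a set set \<Rightarrow> 'a set set" where
  "bases \<I> = {B. B \<in> \<I> \<and> (\<forall>X\<in>\<I>. B \<subseteq> X \<longrightarrow> X = B)}"

end

theory Submission
  imports Defs "HOL-Library.Disjoint_Sets"
begin

text \<open>
  If every base meets every block in exactly one element, then any base B can be moved block
  by block towards a prescribed transversal T: replacing the element x of B in a block by the
  element y of T in that block yields again a base. Indeed, basis exchange with a base
  containing y brings in some element z; z lies in the block of x, since otherwise the new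
  base would meet the block of z twice, and then z = y because a base through y meets that
  block only in y. Each such step shrinks T - B, so T is a base.
\<close>

lemma matroid_finite_ground: "matroid E \<I> \<Longrightarrow> finite E"
  by (simp add: matroid_def)

lemma matroid_indep_subset_ground: "matroid E \<I> \<Longrightarrow> X \<in> \<I> \<Longrightarrow> X \<subseteq> E"
  by (simp add: matroid_def)

lemma matroid_empty_indep: "matroid E \<I> \<Longrightarrow> {} \<in> \<I>"
  by (simp add: matroid_def)

lemma matroid_indep_finite: "matroid E \<I> \<Longrightarrow> X \<in> \<I> \<Longrightarrow> finite X"
  using matroid_finite_ground matroid_indep_subset_ground finite_subset by metis

lemma matroid_indep_subset:
  assumes "matroid E \<I>" and "X \<in> \<I>" and "Y \<subseteq> X"
  shows "Y \<in> \<I>"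
  using assms by (simp add: matroid_def)

lemma matroid_augment:
  assumes "matroid E \<I>" and "X \<in> \<I>" and "Y \<in> \<I>" and "card X < card Y"
  obtains y where "y \<in> Y - X" and "insert y X \<in> \<I>"
proof -
  have "\<forall>X Y. X \<in> \<I> \<longrightarrow> Y \<in> \<I> \<longrightarrow> card X < card Y \<longrightarrow> (\<exists>y\<in>Y - X. insert y X \<in> \<I>)"
    using assms(1) by (simp add: matroid_def)
  with assms(2-4) that show ?thesis
    by blast
qed

lemma bases_subset_indep: "bases \<I> \<subseteq> \<I>"
  unfolding bases_def by blast

lemma matroid_indep_subset_base:
  assumes m: "matroid E \<I>" and X: "X \<in> \<I>"
  obtains B where "B \<in> bases \<I>" and "X \<subseteq> B"
proof -
  let ?S = "{Y \<in> \<I>. X \<subseteq> Y}"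
  have fin: "finite ?S"
    using matroid_finite_ground[OF m] matroid_indep_subset_ground[OF m]
    by (auto intro: rev_finite_subset[of "Pow E"])
  have "Max (card ` ?S) \<in> card ` ?S"
    using fin X by (intro Max_in) auto
  then obtain Y where Y: "Y \<in> ?S" and cardY: "card Y = Max (card ` ?S)"
    by auto
  have max: "card Z \<le> Max (card ` ?S)" if "Z \<in> ?S" for Z
    using fin that by simp
  have "Y \<in> bases \<I>"
    unfolding bases_def
  proof (intro CollectI conjI ballI impI)
    show "Y \<in> \<I>" using Y by simp
  next
    fix Z assume "Z \<in> \<I>" "Y \<subseteq> Z"
    moreover have "card Z \<le> card Y"
      using Y max[of Z] cardY \<open>Z \<in> \<I>\<close> \<open>Y \<subseteq> Z\<close> by auto
    ultimately show "Z = Y"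
      using matroid_indep_finite[OF m] by (metis card_seteq)
  qed
  with Y that show ?thesis by blast
qed

lemma matroid_bases_nonempty:
  assumes "matroid E \<I>"
  obtains B where "B \<in> bases \<I>"
  using matroid_indep_subset_base[OF assms matroid_empty_indep[OF assms]] by blast

lemma matroid_bases_card_eq:
  assumes m: "matroid E \<I>" and "B1 \<in> bases \<I>" and "B2 \<in> bases \<I>"
  shows "card B1 = card B2"
proof -
  have no_bigger: "\<not> card B < card B'" if B: "B \<in> bases \<I>" and B': "B' \<in> bases \<I>" for B B'
  proof
    assume "card B < card B'"
    then obtain y where "y \<in> B' - B" "insert y B \<in> \<I>"
      using matroid_augment[OF m] B B' bases_subset_indep by blast
    then show False
      using B unfolding bases_def by blast
  qed
  show ?thesis
    using no_bigger[of B1 B2] no_bigger[of B2 B1] assms by linarith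
qed

lemma matroid_indep_card_base:
  assumes m: "matroid E \<I>" and X: "X \<in> \<I>" and B: "B \<in> bases \<I>" and card: "card X = card B"
  shows "X \<in> bases \<I>"
proof -
  obtain B' where B': "B' \<in> bases \<I>" "X \<subseteq> B'"
    using matroid_indep_subset_base[OF m X] .
  have "card B' = card X"
    using matroid_bases_card_eq[OF m B'(1) B] card by simp
  moreover have "finite B'"
    using matroid_indep_finite[OF m] B'(1) bases_subset_indep by blast
  ultimately have "X = B'"
    using card_seteq[OF _ B'(2)] by simp
  with B' show ?thesis by simp
qed

lemma matroid_base_exchange:
  assumes m: "matroid E \<I>" and B1: "B1 \<in> bases \<I>" and B2: "B2 \<in> bases \<I>" and x: "x \<in> B1"
  obtains z where "z \<in> B2 - (B1 - {x})" and "insert z (B1 - {x}) \<in> bases \<I>"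
proof -
  have fin: "finite B1"
    using matroid_indep_finite[OF m] B1 bases_subset_indep by blast
  have "card B1 > 0"
    using fin x by (auto simp: card_gt_0_iff)
  then have smaller: "card (B1 - {x}) < card B2"
    using matroid_bases_card_eq[OF m B1 B2] fin x by simp
  have indep: "B1 - {x} \<in> \<I>"
    using matroid_indep_subset[OF m] B1 bases_subset_indep by blast
  obtain z where z: "z \<in> B2 - (B1 - {x})" "insert z (B1 - {x}) \<in> \<I>"
    using matroid_augment[OF m indep _ smaller] B2 bases_subset_indep by blast
  have "card (insert z (B1 - {x})) = card B1"
    using z(1) fin x \<open>card B1 > 0\<close> by simp
  then have "insert z (B1 - {x}) \<in> bases \<I>"
    using matroid_indep_card_base[OF m z(2) B1] by blast
  with z(1) that show ?thesis by blast
qed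

lemma card_1_eq_singleton:
  assumes "card A = 1" and "u \<in> A"
  shows "A = {u}"
  using assms by (metis card_1_singletonE singletonD)

definition transversals :: "('i \<Rightarrow> 'a set) \<Rightarrow> 'i set \<Rightarrow> 'a set set" where
  "transversals K S = {b ` S | b. \<forall>i\<in>S. b i \<in> K i}"

lemma transversals_iff:
  assumes disjoint: "disjoint_family_on K S"
  shows "T \<in> transversals K S \<longleftrightarrow> T \<subseteq> (\<Union>i\<in>S. K i) \<and> (\<forall>i\<in>S. card (T \<inter> K i) = 1)"
proof
  assume "T \<in> transversals K S"
  then obtain b where T: "T = b ` S" and b: "\<And>i. i \<in> S \<Longrightarrow> b i \<in> K i"
    unfolding transversals_def by blast
  have "T \<inter> K i = {b i}" if i: "i \<in> S" for i
  proof
    show "T \<inter> K i \<subseteq> {b i}"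
    proof
      fix u assume "u \<in> T \<inter> K i"
      then obtain j where "j \<in> S" "u = b j" "b j \<in> K i"
        using T by blast
      then have "j = i"
        using b[of j] i disjoint unfolding disjoint_family_on_def by blast
      with \<open>u = b j\<close> show "u \<in> {b i}" by simp
    qed
    show "{b i} \<subseteq> T \<inter> K i"
      using T b i by blast
  qed
  moreover have "T \<subseteq> (\<Union>i\<in>S. K i)"
    using T b by blast
  ultimately show "T \<subseteq> (\<Union>i\<in>S. K i) \<and> (\<forall>i\<in>S. card (T \<inter> K i) = 1)"
    by simp
next
  assume T: "T \<subseteq> (\<Union>i\<in>S. K i) \<and> (\<forall>i\<in>S. card (T \<inter> K i) = 1)"
  define b where "b i = (THE u. T \<inter> K i = {u})" for i
  have b: "T \<inter> K i = {b i}" if "i \<in> S" for i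
  proof -
    have "card (T \<inter> K i) = 1"
      using T that by blast
    then obtain u where "T \<inter> K i = {u}"
      by (rule card_1_singletonE)
    then show ?thesis
      unfolding b_def by simp
  qed
  have "T \<subseteq> b ` S"
  proof
    fix u assume "u \<in> T"
    then obtain i where "i \<in> S" "u \<in> K i"
      using T by blast
    with b \<open>u \<in> T\<close> show "u \<in> b ` S"
      by blast
  qed
  moreover have "b ` S \<subseteq> T"
    using b by blast
  ultimately have "T = b ` S"
    by (rule subset_antisym)
  with b show "T \<in> transversals K S"
    unfolding transversals_def by blast
qed

lemma base_exchange_within_block:
  assumes m: "matroid E \<I>" and disjoint: "disjoint_family_on K S"
    and cover: "\<Union>(bases \<I>) \<subseteq> (\<Union>i\<in>S. K i)"
    and once: "\<forall>B\<in>bases \<I>. \<forall>i\<in>S. card (B \<inter> K i) = 1"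
    and B: "B \<in> bases \<I>" and i: "i \<in> S" and x: "B \<inter> K i = {x}"
    and y: "y \<in> K i" "y \<in> \<Union>(bases \<I>)"
  shows "insert y (B - {x}) \<in> bases \<I>"
proof -
  obtain B2 where B2: "B2 \<in> bases \<I>" "y \<in> B2"
    using y by blast
  obtain z where z: "z \<in> B2 - (B - {x})" and B': "insert z (B - {x}) \<in> bases \<I>"
    using matroid_base_exchange[OF m B B2(1), of x] x by blast
  obtain j where j: "j \<in> S" "z \<in> K j"
    using z B2(1) cover by blast
  have "j = i"
  proof (rule ccontr)
    assume "j \<noteq> i"
    then have disj: "K i \<inter> K j = {}"
      using disjoint i j(1) unfolding disjoint_family_on_def by blast
    obtain w where w: "B \<inter> K j = {w}"
      using card_1_singletonE[OF once[rule_format, OF B j(1)]] .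
    have "z \<in> insert z (B - {x}) \<inter> K j"
      using j(2) by blast
    then have "insert z (B - {x}) \<inter> K j = {z}"
      by (rule card_1_eq_singleton[OF once[rule_format, OF B' j(1)]])
    moreover have "w \<in> insert z (B - {x}) \<inter> K j"
      using w x disj by blast
    ultimately have "w = z"
      by blast
    then show False
      using z w x disj by blast
  qed
  with j(2) z have "z \<in> B2 \<inter> K i"
    by blast
  then have "B2 \<inter> K i = {z}"
    by (rule card_1_eq_singleton[OF once[rule_format, OF B2(1) i]])
  then have "z = y"
    using B2(2) y(1) by auto
  with B' show ?thesis by simp
qed

lemma transversal_mem_bases:
  assumes m: "matroid E \<I>" and disjoint: "disjoint_family_on K S"
    and cover: "\<Union>(bases \<I>) = (\<Union>i\<in>S. K i)"
    and once: "\<forall>B\<in>bases \<I>. \<forall>i\<in>S. card (B \<inter> K i) = 1"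
    and T: "T \<subseteq> (\<Union>i\<in>S. K i)" "\<forall>i\<in>S. card (T \<inter> K i) = 1"
    and B: "B \<in> bases \<I>"
  shows "T \<in> bases \<I>"
  using B
proof (induction "card (T - B)" arbitrary: B rule: less_induct)
  case less
  show ?case
  proof (cases "T \<subseteq> B")
    case True
    have "B \<subseteq> T"
    proof
      fix u assume "u \<in> B"
      then obtain i where i: "i \<in> S" "u \<in> K i"
        using less.prems cover by blast
      obtain v where v: "T \<inter> K i = {v}"
        using card_1_singletonE[OF T(2)[rule_format, OF i(1)]] .
      then have "v \<in> B \<inter> K i"
        using True by blast
      then have "B \<inter> K i = {v}"
        by (rule card_1_eq_singleton[OF once[rule_format, OF less.prems i(1)]])
      with v i \<open>u \<in> B\<close> show "u \<in> T"
        by blast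
    qed
    with True less.prems show ?thesis
      by (simp add: subset_antisym)
  next
    case False
    then obtain y where y: "y \<in> T" "y \<notin> B"
      by blast
    then obtain i where i: "i \<in> S" "y \<in> K i"
      using T(1) by blast
    obtain x where x: "B \<inter> K i = {x}"
      using card_1_singletonE[OF once[rule_format, OF less.prems i(1)]] .
    have "y \<in> \<Union>(bases \<I>)"
      using cover T(1) y(1) by blast
    with base_exchange_within_block[OF m disjoint equalityD1[OF cover] once less.prems i(1) x i(2)]
    have B': "insert y (B - {x}) \<in> bases \<I>" .
    have "T \<inter> K i = {y}"
      using card_1_eq_singleton[of "T \<inter> K i" y] T(2) i y(1) by simp
    moreover have "x \<in> K i" "x \<noteq> y"
      using x y(2) by auto
    ultimately have "x \<notin> T"
      by auto
    then have "T - insert y (B - {x}) = (T - B) - {y}"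
      by blast
    moreover have "finite T"
    proof (rule finite_subset)
      have "\<Union>(bases \<I>) \<subseteq> E"
        using matroid_indep_subset_ground[OF m] bases_subset_indep by blast
      then show "T \<subseteq> E"
        using T(1) cover by simp
    qed (rule matroid_finite_ground[OF m])
    ultimately have "card (T - insert y (B - {x})) < card (T - B)"
      using y card_Diff1_less[of "T - B" y] by simp
    with less.hyps B' show ?thesis
      by blast
  qed
qed

theorem theorem9:
  fixes E :: "'a set" and \<I> :: "'a set set" and K :: "nat \<Rightarrow> 'a set" and t :: nat
  assumes "matroid E \<I>"
    and "inj_on K {1..t}"
    and "\<forall>i\<in>{1..t}. K i \<noteq> {}"
    and "\<forall>i\<in>{1..t}. \<forall>j\<in>{1..t}. i \<noteq> j \<longrightarrow> K i \<inter> K j = {}"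
    and "(\<Union>i\<in>{1..t}. K i) = \<Union>(bases \<I>)"
  shows "(\<forall>B\<in>bases \<I>. \<forall>i\<in>{1..t}. card (B \<inter> K i) = 1) \<longleftrightarrow>
         bases \<I> = {b ` {1..t} | b. \<forall>i\<in>{1..t}. b i \<in> K i}"
proof -
  have disjoint: "disjoint_family_on K {1..t}"
    using assms(4) unfolding disjoint_family_on_def by blast
  have "(\<forall>B\<in>bases \<I>. \<forall>i\<in>{1..t}. card (B \<inter> K i) = 1) \<longleftrightarrow> bases \<I> = transversals K {1..t}"
  proof
    assume once: "\<forall>B\<in>bases \<I>. \<forall>i\<in>{1..t}. card (B \<inter> K i) = 1"
    obtain B0 where B0: "B0 \<in> bases \<I>"
      using matroid_bases_nonempty[OF assms(1)] .
    have "bases \<I> \<subseteq> transversals K {1..t}"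
      using transversals_iff[OF disjoint] once assms(5) by blast
    moreover have "transversals K {1..t} \<subseteq> bases \<I>"
      using transversal_mem_bases[OF assms(1) disjoint assms(5)[symmetric] once _ _ B0]
        transversals_iff[OF disjoint] by blast
    ultimately show "bases \<I> = transversals K {1..t}"
      by (rule antisym)
  qed (use transversals_iff[OF disjoint] in blast)
  then show ?thesis
    unfolding transversals_def .
qed

end
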